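(* If $S\subseteq\{0,1,2\}^m$ and $T\subseteq\{0,1,2\}^{m'}$ are admissible sets, then their direct product $S\times T=\{(s,t): s\in S,t\in T\}\subseteq\{0,1,2\}^{m+m'}$ (with $(s,t)$ the concatenation of $s$ and $t$) is an admissible set.
   Context: A set $S\subseteq\{0,1,2\}^m$ is admissible if (1) for all distinct $s,s'\in S$ there are coordinates $i,j$ with $s_i=0\neq s'_i$ and $s_j\neq 0=s'_j$; and (2) for all distinct $s,s',s''\in S$ there is a coordinate $k$ such that the multiset $\{s_k,s'_k,s''_k\}$ equals $\{0,1,2\}$, $\{0,0,1\}$ or $\{0,0,2\}$. *)

theory Defs
  imports Main "HOL-Library.Multiset"
begin

text \<open>Words in {0,1,2}^m are represented as lists of naturals of length m with entries < 3.\<close>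

definition ternary_words :: "nat \<Rightarrow> nat list set" where
  "ternary_words m = {s. length s = m \<and> (\<forall>i<m. s ! i < 3)}"

definition admissible :: "nat \<Rightarrow> nat list set \<Rightarrow> bool" where
  "admissible m S \<longleftrightarrow> S \<subseteq> ternary_words m \<and>
     (\<forall>s\<in>S. \<forall>s'\<in>S. s \<noteq> s' \<longrightarrow>
        (\<exists>i<m. \<exists>j<m. s ! i = 0 \<and> s' ! i \<noteq> 0 \<and> s ! j \<noteq> 0 \<and> s' ! j = 0)) \<and>
     (\<forall>s\<in>S. \<forall>s'\<in>S. \<forall>s''\<in>S. s \<noteq> s' \<and> s \<noteq> s'' \<and> s' \<noteq> s'' \<longrightarrow>
        (\<exists>k<m. {# s ! k, s' ! k, s'' ! k #} \<in> {{#0, 1, 2#}, {#0, 0, 1#}, {#0, 0, 2#}}))"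

definition direct_product :: "nat list set \<Rightarrow> nat list set \<Rightarrow> nat list set" where
  "direct_product S T = {s @ t | s t. s \<in> S \<and> t \<in> T}"

end

theory Submission
  imports Defs
begin

text \<open>Two distinct words of the product either differ in their S-parts or agree there and differ
  in their T-parts, and the required coordinates of the differing factor are inherited. For three
  words the only new situation is two words s @ t, s @ t' with a common prefix and a third word
  s'' @ t; a coordinate where t is 0 and t' is not then carries the pattern {0, 0, 1} or {0, 0, 2}.\<close>

definition zeros_incomparable :: "nat \<Rightarrow> nat list \<Rightarrow> nat list \<Rightarrow> bool" where
  "zeros_incomparable n x y \<longleftrightarrow>
     (\<exists>i<n. \<exists>j<n. x ! i = 0 \<and> y ! i \<noteq> 0 \<and> x ! j \<noteq> 0 \<and> y ! j = 0)"

definition triple_separated :: "nat \<Rightarrow> nat list \<Rightarrow> nat list \<Rightarrow> nat list \<Rightarrow> bool" where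
  "triple_separated n x y z \<longleftrightarrow>
     (\<exists>k<n. {# x ! k, y ! k, z ! k #} \<in> {{#0, 1, 2#}, {#0, 0, 1#}, {#0, 0, 2#}})"

lemma admissible_iff:
  "admissible m S \<longleftrightarrow> S \<subseteq> ternary_words m \<and>
     (\<forall>s\<in>S. \<forall>s'\<in>S. s \<noteq> s' \<longrightarrow> zeros_incomparable m s s') \<and>
     (\<forall>s\<in>S. \<forall>s'\<in>S. \<forall>s''\<in>S. s \<noteq> s' \<and> s \<noteq> s'' \<and> s' \<noteq> s'' \<longrightarrow> triple_separated m s s' s'')"
  by (simp add: admissible_def zeros_incomparable_def triple_separated_def)

lemma triple_separated_swap12: "triple_separated n x y z \<Longrightarrow> triple_separated n y x z"
  by (simp add: triple_separated_def add_mset_commute)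

lemma triple_separated_swap23: "triple_separated n x y z \<Longrightarrow> triple_separated n x z y"
  by (simp add: triple_separated_def add_mset_commute)

lemma append_in_ternary_words:
  "s \<in> ternary_words m \<Longrightarrow> t \<in> ternary_words m' \<Longrightarrow> s @ t \<in> ternary_words (m + m')"
  by (auto simp: ternary_words_def nth_append)

lemma zeros_incomparable_append_left:
  assumes "length s = m" "length s' = m" "zeros_incomparable m s s'"
  shows "zeros_incomparable (m + m') (s @ t) (s' @ t')"
proof -
  obtain i j where "i < m" "j < m" "s ! i = 0" "s' ! i \<noteq> 0" "s ! j \<noteq> 0" "s' ! j = 0"
    using assms(3) unfolding zeros_incomparable_def by blast
  with assms(1,2) have "i < m + m' \<and> j < m + m' \<and> (s @ t) ! i = 0 \<and> (s' @ t') ! i \<noteq> 0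
      \<and> (s @ t) ! j \<noteq> 0 \<and> (s' @ t') ! j = 0"
    by (simp add: nth_append)
  then show ?thesis unfolding zeros_incomparable_def by blast
qed

lemma zeros_incomparable_append_right:
  assumes "length s = m" "length s' = m" "zeros_incomparable m' t t'"
  shows "zeros_incomparable (m + m') (s @ t) (s' @ t')"
proof -
  obtain i j where "i < m'" "j < m'" "t ! i = 0" "t' ! i \<noteq> 0" "t ! j \<noteq> 0" "t' ! j = 0"
    using assms(3) unfolding zeros_incomparable_def by blast
  with assms(1,2) have "m + i < m + m' \<and> m + j < m + m' \<and> (s @ t) ! (m + i) = 0
      \<and> (s' @ t') ! (m + i) \<noteq> 0 \<and> (s @ t) ! (m + j) \<noteq> 0 \<and> (s' @ t') ! (m + j) = 0"
    by (simp add: nth_append)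
  then show ?thesis unfolding zeros_incomparable_def by blast
qed

lemma triple_separated_append_left:
  assumes "length s1 = m" "length s2 = m" "length s3 = m" "triple_separated m s1 s2 s3"
  shows "triple_separated (m + m') (s1 @ t1) (s2 @ t2) (s3 @ t3)"
proof -
  obtain k where "k < m" "{# s1 ! k, s2 ! k, s3 ! k #} \<in> {{#0, 1, 2#}, {#0, 0, 1#}, {#0, 0, 2#}}"
    using assms(4) unfolding triple_separated_def by blast
  with assms(1-3) show ?thesis
    unfolding triple_separated_def by (intro exI[of _ k]) (simp add: nth_append)
qed

lemma triple_separated_append_right:
  assumes "length s1 = m" "length s2 = m" "length s3 = m" "triple_separated m' t1 t2 t3"
  shows "triple_separated (m + m') (s1 @ t1) (s2 @ t2) (s3 @ t3)"
proof -
  obtain k where "k < m'" "{# t1 ! k, t2 ! k, t3 ! k #} \<in> {{#0, 1, 2#}, {#0, 0, 1#}, {#0, 0, 2#}}"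
    using assms(4) unfolding triple_separated_def by blast
  with assms(1-3) show ?thesis
    unfolding triple_separated_def by (intro exI[of _ "m + k"]) (simp add: nth_append)
qed

lemma triple_separated_if_zeros_incomparable:
  assumes "zeros_incomparable n t t'" "t' \<in> ternary_words n"
  shows "triple_separated n t t' t"
proof -
  obtain i where i: "i < n" "t ! i = 0" "t' ! i \<noteq> 0"
    using assms(1) unfolding zeros_incomparable_def by blast
  with assms(2) have "t' ! i = 1 \<or> t' ! i = 2"
    unfolding ternary_words_def by auto
  with i show ?thesis
    unfolding triple_separated_def by (auto simp: add_mset_commute)
qed

lemma direct_product_subset_ternary_words:
  assumes "S \<subseteq> ternary_words m" "T \<subseteq> ternary_words m'"
  shows "direct_product S T \<subseteq> ternary_words (m + m')"
  using assms append_in_ternary_words unfolding direct_product_def by blast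

lemma zeros_incomparable_direct_product:
  assumes "admissible m S" "admissible m' T"
    and "s \<in> S" "s' \<in> S" "t \<in> T" "t' \<in> T" "s @ t \<noteq> s' @ t'"
  shows "zeros_incomparable (m + m') (s @ t) (s' @ t')"
proof -
  have lengths: "length s = m" "length s' = m"
    using assms(1,3,4) by (auto simp: admissible_iff ternary_words_def)
  show ?thesis
  proof (cases "s = s'")
    case True
    with assms have "zeros_incomparable m' t t'" by (auto simp: admissible_iff)
    with lengths show ?thesis by (rule zeros_incomparable_append_right)
  next
    case False
    with assms have "zeros_incomparable m s s'" by (auto simp: admissible_iff)
    with lengths show ?thesis by (rule zeros_incomparable_append_left)
  qed
qed

lemma triple_separated_direct_product_common_prefix:
  assumes "admissible m S" "admissible m' T"
    and "s \<in> S" "s'' \<in> S" "t \<in> T" "t' \<in> T" "t'' \<in> T" "t \<noteq> t'"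
  shows "triple_separated (m + m') (s @ t) (s @ t') (s'' @ t'')"
proof -
  have lengths: "length s = m" "length s'' = m"
    using assms(1,3,4) by (auto simp: admissible_iff ternary_words_def)
  have T: "T \<subseteq> ternary_words m'" "\<And>u u'. u \<in> T \<Longrightarrow> u' \<in> T \<Longrightarrow> u \<noteq> u' \<Longrightarrow> zeros_incomparable m' u u'"
    using assms(2) by (auto simp: admissible_iff)
  consider "t'' = t" | "t'' = t'" | "t'' \<noteq> t" "t'' \<noteq> t'" by blast
  then show ?thesis
  proof cases
    case 1
    with assms(5-8) T have "triple_separated m' t t' t''"
      by (auto intro: triple_separated_if_zeros_incomparable)
    with lengths show ?thesis by (intro triple_separated_append_right) auto
  next
    case 2
    with assms(5-8) T have "triple_separated m' t' t t''"
      by (auto intro: triple_separated_if_zeros_incomparable)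
    with lengths have "triple_separated (m + m') (s @ t') (s @ t) (s'' @ t'')"
      by (intro triple_separated_append_right) auto
    then show ?thesis by (rule triple_separated_swap12)
  next
    case 3
    with assms(2,5-8) have "triple_separated m' t t' t''" by (auto simp: admissible_iff)
    with lengths show ?thesis by (intro triple_separated_append_right) auto
  qed
qed

lemma triple_separated_direct_product:
  assumes "admissible m S" "admissible m' T"
    and "s1 \<in> S" "s2 \<in> S" "s3 \<in> S" "t1 \<in> T" "t2 \<in> T" "t3 \<in> T"
    and "s1 @ t1 \<noteq> s2 @ t2" "s1 @ t1 \<noteq> s3 @ t3" "s2 @ t2 \<noteq> s3 @ t3"
  shows "triple_separated (m + m') (s1 @ t1) (s2 @ t2) (s3 @ t3)"
proof -
  note common_prefix = triple_separated_direct_product_common_prefix[OF assms(1,2)]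
  consider "s1 = s2" | "s1 = s3" | "s2 = s3" | "s1 \<noteq> s2" "s1 \<noteq> s3" "s2 \<noteq> s3" by blast
  then show ?thesis
  proof cases
    case 1
    with assms(9) have "t1 \<noteq> t2" by simp
    from common_prefix[OF assms(3,5,6,7,8) this] 1 show ?thesis by simp
  next
    case 2
    with assms(10) have "t1 \<noteq> t3" by simp
    from common_prefix[OF assms(3,4,6,8,7) this] 2
    have "triple_separated (m + m') (s1 @ t1) (s3 @ t3) (s2 @ t2)" by simp
    then show ?thesis by (rule triple_separated_swap23)
  next
    case 3
    with assms(11) have "t2 \<noteq> t3" by simp
    from common_prefix[OF assms(4,3,7,8,6) this] 3
    have "triple_separated (m + m') (s2 @ t2) (s3 @ t3) (s1 @ t1)" by simp
    then show ?thesis by (rule triple_separated_swap12[OF triple_separated_swap23])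
  next
    case 4
    with assms(1,3-5) have "triple_separated m s1 s2 s3"
      and "length s1 = m" "length s2 = m" "length s3 = m"
      by (auto simp: admissible_iff ternary_words_def)
    then show ?thesis by (intro triple_separated_append_left)
  qed
qed

theorem proposition3p1:
  fixes m m' :: nat and S T :: "nat list set"
  assumes "admissible m S" and "admissible m' T"
  shows "admissible (m + m') (direct_product S T)"
  unfolding admissible_iff
proof (intro conjI ballI impI)
  show "direct_product S T \<subseteq> ternary_words (m + m')"
    using assms by (intro direct_product_subset_ternary_words) (auto simp: admissible_iff)
next
  fix x y assume "x \<in> direct_product S T" "y \<in> direct_product S T" "x \<noteq> y"
  then show "zeros_incomparable (m + m') x y"
    using zeros_incomparable_direct_product[OF assms] unfolding direct_product_def by blast
next
  fix x y z assume "x \<in> direct_product S T" "y \<in> direct_product S T" "z \<in> direct_product S T"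
    and "x \<noteq> y \<and> x \<noteq> z \<and> y \<noteq> z"
  then show "triple_separated (m + m') x y z"
    using triple_separated_direct_product[OF assms] unfolding direct_product_def by blast
qed

end
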